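(* Assume $\lambda_1<\lambda_2$ and $\lambda_1<\lambda_3$, and fix $a,b>0$. Then for all sufficiently large $\Delta>0$ there exist constants $C>0$ and $\varepsilon>0$ such that for every $y=(y_2,y_3)\in\mathbb Z^2$ with $\min(y_2,y_3)<0$ and $\varphi(y)>C$: (a) $D_R(y):=\sum_{z\ne y} r_{yz}\,(\varphi(z)-\varphi(y))\le 0$; (b) $\varphi(y+M_F(y))-\varphi(y)<-5\varepsilon$, where $M_F(y)=(\lambda_2-\lambda_1,\lambda_3-\lambda_1)$.
   Context: Markov chain $Y(n)=(y_2,y_3)\in\mathbb Z^2$ (relative coordinates $y_j=x_j-x_1$ of the embedded chain of the 3-processor cascade model, time normalized so that $\lambda_1+\lambda_2+\lambda_3+\beta_{12}+\beta_{23}=1$, all parameters positive). Its transition probabilities are $p_{yz}=s_{yz}+r_{yz}$ for $z\ne y$, $p_{yy}=1-\sum_{z\ne y}p_{yz}$, where the free-dynamics part is $s_{y,y+(1,0)}=\lambda_2$, $s_{y,y+(0,1)}=\lambda_3$, $s_{y,y-(1,1)}=\lambda_1$ (others $0$), and the rollback part $r_{yz}$ (with $b_2=\lambda_2/(\lambda_2+\beta_{23})$) is: if $y_2>0$ and $y_3\le 0$: $r_{y,(0,y_3)}=\beta_{12}$; if $y_2<y_3$: $r_{y,(y_2,y_2)}$ receives $\beta_{23}$; if $0<y_3\le y_2$: $r_{y,(0,z_3)}$ receives $\beta_{12}(1-b_2)^{z_3}b_2$ for $0\le z_3<y_3$ and $\beta_{12}(1-b_2)^{y_3}$ for $z_3=y_3$;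 if $0<y_2<y_3$: $r_{y,(0,z_3)}$ receives $\beta_{12}(1-b_2)^{z_3}b_2$ for $0\le z_3\le y_2$ and $\beta_{12}(1-b_2)^{y_2+1}$ for $z_3=y_3$ (contributions to the same $z$ are added). Contour $L$: let $e(y)=ay_2^2+b(y_2-y_3)^2$; let $T_3$ be the point of the ellipse $\{e=1\}$ at which the outer normal has direction $(-\Delta,1)$ and $T_2$ the point at which it has direction $(1,-\Delta)$ (for large $\Delta$, $T_3$ lies in $\{y_2<0,y_3<0\}$ and $T_2$ in $\{y_3<0\}$); let $K_3=(0,u_3)$ be the intersection of the tangent line at $T_3$ with the $y_3$-axis and $K_2=(u_2,0)$ the intersection of the tangent line at $T_2$ with the $y_2$-axis ($u_2,u_3>0$). $L$ is the closed curve formed by the segment $K_3K_2$, the segment $K_2T_2$, the arc $T_2T_3$ of the ellipse passing through $(-a^{-1/2},-a^{-1/2})$, and the segment $T_3K_3$; every open ray from the origin meets $L$ exactly once. Define $\varphi(0)=0$ and, for $y\ne0$, $\varphi(y)>0$ as the unique number with $y/\varphi(y)\in L$. *)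

theory Defs
  imports "HOL-Analysis.Analysis"
begin

definition ell :: "real \<Rightarrow> real \<Rightarrow> real \<times> real \<Rightarrow> real" where
  "ell a b p = a * (fst p)^2 + b * (fst p - snd p)^2"

definition ell_grad :: "real \<Rightarrow> real \<Rightarrow> real \<times> real \<Rightarrow> real \<times> real" where
  "ell_grad a b p = (2 * a * fst p + 2 * b * (fst p - snd p), - 2 * b * (fst p - snd p))"

definition T3 :: "real \<Rightarrow> real \<Rightarrow> real \<Rightarrow> real \<times> real" where
  "T3 a b D = (THE p. ell a b p = 1 \<and> (\<exists>t>0. ell_grad a b p = t *\<^sub>R (- D, 1)))"

definition T2 :: "real \<Rightarrow> real \<Rightarrow> real \<Rightarrow> real \<times> real" where
  "T2 a b D = (THE p. ell a b p = 1 \<and> (\<exists>t>0. ell_grad a b p = t *\<^sub>R (1, - D)))"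

text \<open>K3 = (0,u3): intersection of the tangent line at T3 with the y3-axis;
  K2 = (u2,0): intersection of the tangent line at T2 with the y2-axis.\<close>
definition K3 :: "real \<Rightarrow> real \<Rightarrow> real \<Rightarrow> real \<times> real" where
  "K3 a b D = (0, THE u. inner (ell_grad a b (T3 a b D)) ((0, u) - T3 a b D) = 0)"

definition K2 :: "real \<Rightarrow> real \<Rightarrow> real \<Rightarrow> real \<times> real" where
  "K2 a b D = (THE u. inner (ell_grad a b (T2 a b D)) ((u, 0) - T2 a b D) = 0, 0)"

definition ell_arc :: "real \<Rightarrow> real \<Rightarrow> real \<Rightarrow> (real \<times> real) set" where
  "ell_arc a b D =
     connected_component_set ({p. ell a b p = 1} - {T2 a b D, T3 a b D})
        (- 1 / sqrt a, - 1 / sqrt a) \<union> {T2 a b D, T3 a b D}"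

definition contour_L :: "real \<Rightarrow> real \<Rightarrow> real \<Rightarrow> (real \<times> real) set" where
  "contour_L a b D =
     closed_segment (K3 a b D) (K2 a b D) \<union> closed_segment (K2 a b D) (T2 a b D)
     \<union> ell_arc a b D \<union> closed_segment (T3 a b D) (K3 a b D)"

definition phi :: "real \<Rightarrow> real \<Rightarrow> real \<Rightarrow> real \<times> real \<Rightarrow> real" where
  "phi a b D y = (if y = 0 then 0 else (THE s. s > 0 \<and> (inverse s) *\<^sub>R y \<in> contour_L a b D))"

definition toR :: "int \<times> int \<Rightarrow> real \<times> real" where
  "toR z = (real_of_int (fst z), real_of_int (snd z))"

text \<open>Rollback part r_{yz} of the transition probabilities (contributions added),
  with b2 = lambda2 / (lambda2 + beta23).\<close>
definition rb :: "real \<Rightarrow> real \<Rightarrow> real \<Rightarrow> int \<times> int \<Rightarrow> int \<times> int \<Rightarrow> real" where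
  "rb l2 b12 b23 y z =
    (let y2 = fst y; y3 = snd y; z2 = fst z; z3 = snd z; b2 = l2 / (l2 + b23) in
       (if y2 > 0 \<and> y3 \<le> 0 \<and> z = (0, y3) then b12 else 0)
     + (if y2 < y3 \<and> z = (y2, y2) then b23 else 0)
     + (if 0 < y3 \<and> y3 \<le> y2 then
          (if z2 = 0 \<and> 0 \<le> z3 \<and> z3 < y3 then b12 * (1 - b2) ^ nat z3 * b2 else 0)
        + (if z = (0, y3) then b12 * (1 - b2) ^ nat y3 else 0)
        else 0)
     + (if 0 < y2 \<and> y2 < y3 then
          (if z2 = 0 \<and> 0 \<le> z3 \<and> z3 \<le> y2 then b12 * (1 - b2) ^ nat z3 * b2 else 0)
        + (if z = (0, y3) then b12 * (1 - b2) ^ nat (y2 + 1) else 0)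
        else 0))"

text \<open>D_R(y) = sum over z /= y of r_{yz} (phi z - phi y); only finitely many r_{yz} are nonzero.\<close>
definition D_R :: "real \<Rightarrow> real \<Rightarrow> real \<Rightarrow> real \<Rightarrow> real \<Rightarrow> real \<Rightarrow> int \<times> int \<Rightarrow> real" where
  "D_R l2 b12 b23 a b D y =
     (\<Sum>z | z \<noteq> y \<and> rb l2 b12 b23 y z \<noteq> 0.
        rb l2 b12 b23 y z * (phi a b D (toR z) - phi a b D (toR y)))"

end

theory Submission
  imports Defs
begin

(*
  Let B be the polar form of e, so that B(q, .) = 1 is the tangent line of the ellipse at q.
  The segments K2T2 and T3K3 lie on the tangent lines at T2 and T3, and the tangent lines at all
  points of the arc T2T3 support the region bounded by L. Hence, outside the positive quadrant,
  phi is the support function of the arc: phi(x) = max {B(q, x) | q on the arc}. Every arc point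
  is q = alpha T3 + beta T2 with alpha, beta >= 0 and alpha + beta >= 1.

  (b) If q attains the maximum at x + M, then phi(x + M) - phi(x) <= B(q, M)
  <= max (B(T2, M), B(T3, M)), which is negative once Delta exceeds both ratios of the
  components of M.

  (a) A rollback moves y either to (0, y3) with y3 < 0, where phi = B(T2, .) <= B(T2, y) <= phi(y),
  or to the diagonal point (y2, y2) with y2 < 0, whose direction lies on the arc, so that
  phi(y2, y2) = B(q, y) <= phi(y) for the arc point q in that direction.
*)

section \<open>Determinants and cones in the plane\<close>

definition det2 :: "real \<times> real \<Rightarrow> real \<times> real \<Rightarrow> real" where
  "det2 u v = fst u * snd v - snd u * fst v"

lemma det2_self [simp]: "det2 u u = 0"
  by (simp add: det2_def)

lemma det2_scaleR_right: "det2 u (c *\<^sub>R v) = c * det2 u v"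
  and det2_scaleR_left: "det2 (c *\<^sub>R u) v = c * det2 u v"
  by (simp_all add: det2_def algebra_simps)

lemma det2_swap: "det2 u v = - det2 v u"
  by (simp add: det2_def)

lemma det2_lincomb_right: "det2 u (\<alpha> *\<^sub>R u + \<beta> *\<^sub>R v) = \<beta> * det2 u v"
  and det2_lincomb_left: "det2 (\<alpha> *\<^sub>R u + \<beta> *\<^sub>R v) v = \<alpha> * det2 u v"
  by (simp_all add: det2_def algebra_simps)

lemma continuous_on_det2 [continuous_intros]:
  "continuous_on S f \<Longrightarrow> continuous_on S g \<Longrightarrow> continuous_on S (\<lambda>x. det2 (f x) (g x))"
  unfolding det2_def by (intro continuous_intros)

lemma det2_decomp:
  assumes "det2 u v \<noteq> 0"
  shows "x = (det2 x v / det2 u v) *\<^sub>R u + (det2 u x / det2 u v) *\<^sub>R v"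
proof -
  have "det2 u v *\<^sub>R x = det2 x v *\<^sub>R u + det2 u x *\<^sub>R v"
    by (simp add: det2_def prod_eq_iff algebra_simps)
  then have "x = inverse (det2 u v) *\<^sub>R (det2 x v *\<^sub>R u + det2 u x *\<^sub>R v)"
    using assms by (metis scaleR_left_imp_eq scaleR_scaleR right_inverse scaleR_one)
  then show ?thesis
    by (simp add: scaleR_add_right divide_inverse_commute)
qed

lemma cone_decomp:
  assumes "det2 u v > 0" "det2 u x \<ge> 0" "det2 x v \<ge> 0"
  obtains \<alpha> \<beta> where "\<alpha> \<ge> 0" "\<beta> \<ge> 0" "x = \<alpha> *\<^sub>R u + \<beta> *\<^sub>R v"
  using det2_decomp[of u v x] assms by (intro that[of "det2 x v / det2 u v" "det2 u x / det2 u v"]) auto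

lemma scaleR_inverse_sum_in_closed_segment:
  fixes u v :: "'a::real_vector"
  assumes "\<alpha> \<ge> 0" "\<beta> \<ge> 0" "\<alpha> + \<beta> > 0"
  shows "(\<alpha> *\<^sub>R u + \<beta> *\<^sub>R v) /\<^sub>R (\<alpha> + \<beta>) \<in> closed_segment u v"
proof -
  have "(\<alpha> *\<^sub>R u + \<beta> *\<^sub>R v) /\<^sub>R (\<alpha> + \<beta>) = (1 - \<beta> / (\<alpha> + \<beta>)) *\<^sub>R u + (\<beta> / (\<alpha> + \<beta>)) *\<^sub>R v"
    using assms by (simp add: scaleR_add_right field_simps)
  moreover have "0 \<le> \<beta> / (\<alpha> + \<beta>)" "\<beta> / (\<alpha> + \<beta>) \<le> 1"
    using assms by auto
  ultimately show ?thesis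
    unfolding closed_segment_def by blast
qed

lemma ray_meets_closed_segment:
  assumes "det2 u v > 0" "det2 u x \<ge> 0" "det2 x v \<ge> 0" "x \<noteq> 0"
  shows "\<exists>s>0. x /\<^sub>R s \<in> closed_segment u v"
proof -
  obtain \<alpha> \<beta> where ab: "\<alpha> \<ge> 0" "\<beta> \<ge> 0" and x: "x = \<alpha> *\<^sub>R u + \<beta> *\<^sub>R v"
    using cone_decomp[OF assms(1-3)] .
  have "\<alpha> + \<beta> > 0"
    using ab x assms(4) by (cases "\<alpha> = 0 \<and> \<beta> = 0") auto
  with ab show ?thesis
    unfolding x by (blast intro: scaleR_inverse_sum_in_closed_segment)
qed

lemma connected_component_eq_separated_part:
  assumes "connected (S \<inter> U)" "x \<in> S \<inter> U" "open U" "open V" "S \<subseteq> U \<union> V" "U \<inter> V = {}"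
  shows "connected_component_set S x = S \<inter> U"
proof (rule connected_component_unique)
  fix C assume C: "x \<in> C" "C \<subseteq> S" "connected C"
  then have "U \<inter> C = {} \<or> V \<inter> C = {}"
    using assms(3-6) by (intro connectedD) auto
  with C assms(2,5) show "C \<subseteq> S \<inter> U"
    by blast
qed (use assms in auto)

lemma min_scaleR_neg:
  fixes x :: "real \<times> real"
  assumes "min (fst x) (snd x) < 0" "c > 0"
  shows "min (fst (c *\<^sub>R x)) (snd (c *\<^sub>R x)) < 0"
  using assms by (auto simp: min_less_iff_disj mult_pos_neg)

section \<open>The polar form of the ellipse\<close>

lemma ell_scaleR: "ell a b (c *\<^sub>R x) = c\<^sup>2 * ell a b x"
  unfolding ell_def by (simp add: power2_eq_square algebra_simps)

lemma continuous_on_ell [continuous_intros]: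
  "continuous_on S f \<Longrightarrow> continuous_on S (\<lambda>x. ell a b (f x))"
  unfolding ell_def by (intro continuous_intros)

locale ellipse_form =
  fixes a b :: real
  assumes a_pos: "a > 0" and b_pos: "b > 0"
begin

definition polar :: "real \<times> real \<Rightarrow> real \<times> real \<Rightarrow> real" where
  "polar p x = a * fst p * fst x + b * (fst p - snd p) * (fst x - snd x)"

definition ell_normalize :: "real \<times> real \<Rightarrow> real \<times> real" where
  "ell_normalize x = x /\<^sub>R sqrt (ell a b x)"

lemma polar_self: "polar x x = ell a b x"
  unfolding polar_def ell_def by (simp add: power2_eq_square)

lemma polar_commute: "polar p x = polar x p"
  unfolding polar_def by (simp add: mult_ac)

lemma polar_add_right: "polar p (x + y) = polar p x + polar p y"
  and polar_scaleR_right: "polar p (c *\<^sub>R x) = c * polar p x"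
  and polar_lincomb_left: "polar (s *\<^sub>R p + t *\<^sub>R q) x = s * polar p x + t * polar q x"
  and polar_lincomb_right: "polar p (s *\<^sub>R x + t *\<^sub>R y) = s * polar p x + t * polar p y"
  unfolding polar_def by (simp_all add: algebra_simps)

lemma inner_ell_grad: "inner (ell_grad a b p) x = 2 * polar p x"
  unfolding ell_grad_def polar_def by (simp add: inner_prod_def algebra_simps)

lemma ell_pos:
  assumes "x \<noteq> 0"
  shows "ell a b x > 0"
proof (cases "fst x = 0")
  case True
  with assms have "snd x \<noteq> 0"
    by (simp add: prod_eq_iff)
  with True show ?thesis
    using b_pos by (simp add: ell_def)
next
  case False
  then show ?thesis
    using a_pos b_pos by (simp add: ell_def add_pos_nonneg)
qed

lemma cauchy_schwarz_polar: "(polar p x)\<^sup>2 \<le> ell a b p * ell a b x"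
proof -
  have "ell a b p * ell a b x - (polar p x)\<^sup>2
      = a * b * (fst p * (fst x - snd x) - fst x * (fst p - snd p))\<^sup>2"
    unfolding ell_def polar_def by (simp add: power2_eq_square algebra_simps)
  also have "\<dots> \<ge> 0"
    using a_pos b_pos by simp
  finally show ?thesis by simp
qed

lemma polar_le_1:
  assumes "ell a b p = 1" "ell a b x = 1"
  shows "polar p x \<le> 1"
proof (rule power2_le_imp_le)
  show "(polar p x)\<^sup>2 \<le> 1\<^sup>2"
    using cauchy_schwarz_polar[of p x] assms by simp
qed simp

lemma ell_ell_normalize: "x \<noteq> 0 \<Longrightarrow> ell a b (ell_normalize x) = 1"
  using ell_pos[of x] by (simp add: ell_normalize_def ell_scaleR power_inverse)

lemma polar_ell_normalize: "polar (ell_normalize x) y = polar x y / sqrt (ell a b x)"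
  by (simp add: ell_normalize_def polar_commute[of _ y] polar_scaleR_right divide_inverse_commute)

lemma ell_grad_eq_0_iff: "ell_grad a b p = 0 \<longleftrightarrow> p = 0"
  using a_pos b_pos by (cases p) (auto simp: ell_grad_def zero_prod_def)

lemma ellipse_normal_unique:
  assumes "ell a b p = 1" "ell a b q = 1" "ell_grad a b p = s *\<^sub>R v" "ell_grad a b q = t *\<^sub>R v"
    and "s > 0" "t > 0"
  shows "p = q"
proof -
  have "ell_grad a b (t *\<^sub>R p - s *\<^sub>R q) = t *\<^sub>R ell_grad a b p - s *\<^sub>R ell_grad a b q"
    by (simp add: ell_grad_def algebra_simps)
  also have "\<dots> = 0"
    using assms(3,4) by (simp add: mult.commute)
  finally have tp: "t *\<^sub>R p = s *\<^sub>R q"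
    unfolding ell_grad_eq_0_iff by simp
  have "t\<^sup>2 = ell a b (t *\<^sub>R p)"
    using assms(1) by (simp add: ell_scaleR)
  also have "\<dots> = s\<^sup>2"
    using assms(2) by (simp add: tp ell_scaleR)
  finally have "t = s"
    using assms(5,6) by (simp add: power2_eq_iff_nonneg)
  then show ?thesis
    using tp assms(5) by simp
qed

lemma polar_le_1_closed_segment:
  assumes "x \<in> closed_segment u v" "polar q u \<le> 1" "polar q v \<le> 1"
  shows "polar q x \<le> 1"
proof -
  obtain t where t: "0 \<le> t" "t \<le> 1" "x = (1 - t) *\<^sub>R u + t *\<^sub>R v"
    using assms(1) unfolding closed_segment_def by blast
  have "polar q x = (1 - t) * polar q u + t * polar q v"
    unfolding t(3) polar_lincomb_right ..
  also have "\<dots> \<le> (1 - t) * 1 + t * 1"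
    using t assms by (intro add_mono mult_left_mono) auto
  finally show ?thesis by simp
qed

lemma polar_eq_1_closed_segment:
  assumes "x \<in> closed_segment u v" "polar q u = 1" "polar q v = 1"
  shows "polar q x = 1"
proof -
  obtain t where "x = (1 - t) *\<^sub>R u + t *\<^sub>R v"
    using assms(1) unfolding closed_segment_def by blast
  then show ?thesis
    using assms(2,3) by (simp add: polar_lincomb_right)
qed

end

section \<open>The contour and its gauge\<close>

locale tangent_contour = ellipse_form +
  fixes D :: real
  assumes D_gt_1: "D > 1"
begin

definition u2 :: real where "u2 = sqrt ((1 - D)\<^sup>2 / a + D\<^sup>2 / b)"
definition u3 :: real where "u3 = sqrt ((1 - D)\<^sup>2 / a + 1 / b)"

definition tp2 :: "real \<times> real" where "tp2 = ((1 - D) / a / u2, ((1 - D) / a - D / b) / u2)"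
definition tp3 :: "real \<times> real" where "tp3 = ((1 - D) / a / u3, ((1 - D) / a + 1 / b) / u3)"

lemma u2_pos: "u2 > 0" and u3_pos: "u3 > 0"
  using a_pos b_pos D_gt_1 unfolding u2_def u3_def
  by (auto intro!: add_nonneg_pos)

lemma u2_sq: "u2\<^sup>2 = (1 - D)\<^sup>2 / a + D\<^sup>2 / b" and u3_sq: "u3\<^sup>2 = (1 - D)\<^sup>2 / a + 1 / b"
  using a_pos b_pos unfolding u2_def u3_def by simp_all

lemma tp2_neg: "fst tp2 < 0" "snd tp2 < 0" and fst_tp3_neg: "fst tp3 < 0"
proof -
  have "(1 - D) / a < 0" "D / b > 0"
    using a_pos b_pos D_gt_1 by (simp_all add: divide_neg_pos)
  then show "fst tp2 < 0" "snd tp2 < 0" "fst tp3 < 0"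
    unfolding tp2_def tp3_def fst_conv snd_conv
    by (auto intro!: divide_neg_pos u2_pos u3_pos simp del: divide_divide_eq_left)
qed

lemma polar_tp2: "polar tp2 x = (fst x - D * snd x) / u2"
  using a_pos b_pos u2_pos unfolding polar_def tp2_def by (simp add: field_simps)

lemma polar_tp3: "polar tp3 x = (snd x - D * fst x) / u3"
  using a_pos b_pos u3_pos unfolding polar_def tp3_def by (simp add: field_simps)

lemma ell_tp2: "ell a b tp2 = 1"
proof -
  have "ell a b tp2 = (fst tp2 - D * snd tp2) / u2"
    by (simp add: polar_self[symmetric] polar_tp2)
  also have "\<dots> = ((1 - D)\<^sup>2 / a + D\<^sup>2 / b) / u2\<^sup>2"
    using a_pos b_pos u2_pos unfolding tp2_def by (simp add: field_simps power2_eq_square)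
  finally show ?thesis
    using u2_pos by (simp flip: u2_sq)
qed

lemma ell_tp3: "ell a b tp3 = 1"
proof -
  have "ell a b tp3 = (snd tp3 - D * fst tp3) / u3"
    by (simp add: polar_self[symmetric] polar_tp3)
  also have "\<dots> = ((1 - D)\<^sup>2 / a + 1 / b) / u3\<^sup>2"
    using a_pos b_pos u3_pos unfolding tp3_def by (simp add: field_simps power2_eq_square)
  finally show ?thesis
    using u3_pos by (simp flip: u3_sq)
qed

lemma ell_grad_tp2: "ell_grad a b tp2 = (2 / u2) *\<^sub>R (1, - D)"
  using a_pos b_pos u2_pos unfolding ell_grad_def tp2_def by (simp add: field_simps)

lemma ell_grad_tp3: "ell_grad a b tp3 = (2 / u3) *\<^sub>R (- D, 1)"
  using a_pos b_pos u3_pos unfolding ell_grad_def tp3_def by (simp add: field_simps)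

lemma T2_eq: "T2 a b D = tp2"
  unfolding T2_def
proof (rule the_equality)
  show "ell a b tp2 = 1 \<and> (\<exists>t>0. ell_grad a b tp2 = t *\<^sub>R (1, - D))"
    using ell_tp2 ell_grad_tp2 u2_pos by auto
next
  fix p assume "ell a b p = 1 \<and> (\<exists>t>0. ell_grad a b p = t *\<^sub>R (1, - D))"
  then obtain t where "ell a b p = 1" "ell_grad a b p = t *\<^sub>R (1, - D)" "t > 0"
    by blast
  from ellipse_normal_unique[OF this(1) ell_tp2 this(2) ell_grad_tp2 this(3)] u2_pos
  show "p = tp2" by simp
qed

lemma T3_eq: "T3 a b D = tp3"
  unfolding T3_def
proof (rule the_equality)
  show "ell a b tp3 = 1 \<and> (\<exists>t>0. ell_grad a b tp3 = t *\<^sub>R (- D, 1))"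
    using ell_tp3 ell_grad_tp3 u3_pos by auto
next
  fix p assume "ell a b p = 1 \<and> (\<exists>t>0. ell_grad a b p = t *\<^sub>R (- D, 1))"
  then obtain t where "ell a b p = 1" "ell_grad a b p = t *\<^sub>R (- D, 1)" "t > 0"
    by blast
  from ellipse_normal_unique[OF this(1) ell_tp3 this(2) ell_grad_tp3 this(3)] u3_pos
  show "p = tp3" by simp
qed

lemma K2_eq: "K2 a b D = (u2, 0)"
proof -
  have grad: "inner (ell_grad a b tp2) ((u, 0) - tp2) = 2 * (u / u2) - 2" for u
    unfolding inner_diff_right inner_ell_grad polar_self ell_tp2 by (simp add: polar_tp2)
  have "inner (ell_grad a b tp2) ((u, 0) - tp2) = 0 \<longleftrightarrow> u = u2" for u
    unfolding grad using u2_pos by (simp add: field_simps)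
  then show ?thesis
    unfolding K2_def T2_eq by simp
qed

lemma K3_eq: "K3 a b D = (0, u3)"
proof -
  have grad: "inner (ell_grad a b tp3) ((0, u) - tp3) = 2 * (u / u3) - 2" for u
    unfolding inner_diff_right inner_ell_grad polar_self ell_tp3 by (simp add: polar_tp3)
  have "inner (ell_grad a b tp3) ((0, u) - tp3) = 0 \<longleftrightarrow> u = u3" for u
    unfolding grad using u3_pos by (simp add: field_simps)
  then show ?thesis
    unfolding K3_def T3_eq by simp
qed

lemma det2_tp3_tp2_pos: "det2 tp3 tp2 > 0"
proof -
  have "det2 tp3 tp2 = (D - 1) * (D + 1) / (a * b * u2 * u3)"
    using a_pos b_pos u2_pos u3_pos unfolding det2_def tp2_def tp3_def
    by (simp add: field_simps)
  then show ?thesis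
    using a_pos b_pos u2_pos u3_pos D_gt_1 by simp
qed

lemma det2_K3_tp3_pos: "det2 (0, u3) tp3 > 0"
  using fst_tp3_neg u3_pos by (simp add: det2_def mult_pos_neg)

lemma det2_tp2_K2_pos: "det2 tp2 (u2, 0) > 0"
  using tp2_neg u2_pos by (simp add: det2_def mult_neg_pos)

lemma det2_diagonal_pos:
  assumes "t < 0"
  shows "det2 tp3 (t, t) > 0" "det2 (t, t) tp2 > 0"
proof -
  have "det2 tp3 (t, t) = - t / (b * u3)" "det2 (t, t) tp2 = - t * D / (b * u2)"
    using a_pos b_pos u2_pos u3_pos unfolding det2_def tp2_def tp3_def by (simp_all add: field_simps)
  then show "det2 tp3 (t, t) > 0" "det2 (t, t) tp2 > 0"
    using assms b_pos u2_pos u3_pos D_gt_1 by (simp_all add: divide_neg_pos mult_neg_pos)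
qed

definition cone_arc :: "(real \<times> real) set" where
  "cone_arc = {q. ell a b q = 1 \<and> det2 tp3 q \<ge> 0 \<and> det2 q tp2 \<ge> 0}"

lemma tp2_in_cone_arc: "tp2 \<in> cone_arc" and tp3_in_cone_arc: "tp3 \<in> cone_arc"
  using ell_tp2 ell_tp3 det2_tp3_tp2_pos by (auto simp: cone_arc_def)

lemma cone_arc_endpoint:
  assumes "q \<in> cone_arc" "det2 tp3 q = 0 \<or> det2 q tp2 = 0"
  shows "q = tp3 \<or> q = tp2"
proof -
  obtain \<alpha> \<beta> where ab: "\<alpha> \<ge> 0" "\<beta> \<ge> 0" and q: "q = \<alpha> *\<^sub>R tp3 + \<beta> *\<^sub>R tp2"
    using cone_decomp[OF det2_tp3_tp2_pos] assms(1) unfolding cone_arc_def by blast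
  have "\<beta> = 0 \<or> \<alpha> = 0"
    using assms(2) det2_tp3_tp2_pos unfolding q det2_lincomb_right det2_lincomb_left by auto
  moreover have "ell a b q = 1"
    using assms(1) by (simp add: cone_arc_def)
  ultimately show ?thesis
    using ab unfolding q by (auto simp: ell_scaleR ell_tp2 ell_tp3 power2_eq_1_iff)
qed

lemma ell_normalize_in_cone_arc:
  assumes "x \<noteq> 0" "det2 tp3 x \<ge> 0" "det2 x tp2 \<ge> 0"
  shows "ell_normalize x \<in> cone_arc"
  using assms ell_ell_normalize[OF assms(1)] ell_pos[OF assms(1)]
  by (simp add: cone_arc_def ell_normalize_def det2_scaleR_left det2_scaleR_right)

definition open_cone :: "(real \<times> real) set" where
  "open_cone = {x. det2 tp3 x > 0 \<and> det2 x tp2 > 0}"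

lemma zero_notin_open_cone: "0 \<notin> open_cone"
  by (simp add: open_cone_def det2_def)

lemma convex_open_cone: "convex open_cone"
proof -
  have "open_cone = {x. inner (- snd tp3, fst tp3) x > 0} \<inter> {x. inner (snd tp2, - fst tp2) x > 0}"
    by (auto simp: open_cone_def det2_def inner_prod_def algebra_simps)
  then show ?thesis
    by (simp add: convex_Int convex_halfspace_gt)
qed

lemma ellipse_inter_open_cone_eq_image: "{q. ell a b q = 1} \<inter> open_cone = ell_normalize ` open_cone"
proof (intro equalityI subsetI)
  fix q assume "q \<in> {q. ell a b q = 1} \<inter> open_cone"
  then have "q = ell_normalize q" "q \<in> open_cone"
    by (simp_all add: ell_normalize_def)
  then show "q \<in> ell_normalize ` open_cone"
    by blast
next
  fix q assume "q \<in> ell_normalize ` open_cone"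
  then obtain x where x: "x \<in> open_cone" and q: "q = ell_normalize x"
    by blast
  with zero_notin_open_cone have "x \<noteq> 0"
    by blast
  with x show "q \<in> {q. ell a b q = 1} \<inter> open_cone"
    unfolding q using ell_ell_normalize ell_pos[of x]
    by (simp add: open_cone_def ell_normalize_def det2_scaleR_left det2_scaleR_right)
qed

lemma ell_arc_eq: "ell_arc a b D = cone_arc"
proof -
  define S where "S = {p. ell a b p = 1} - {tp2, tp3}"
  define V where "V = {x. det2 tp3 x < 0 \<or> det2 x tp2 < 0}"
  define P0 where "P0 = (- 1 / sqrt a, - 1 / sqrt a)"
  have P0: "ell a b P0 = 1" "P0 \<in> open_cone"
    using a_pos det2_diagonal_pos[of "- 1 / sqrt a"]
    by (simp_all add: P0_def ell_def power_divide open_cone_def)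
  have tp_notin: "tp2 \<notin> open_cone" "tp3 \<notin> open_cone"
    by (simp_all add: open_cone_def)
  have "S \<inter> open_cone = ell_normalize ` open_cone"
    using tp_notin by (auto simp: S_def simp flip: ellipse_inter_open_cone_eq_image)
  moreover have "continuous_on open_cone ell_normalize"
    unfolding ell_normalize_def
    by (intro continuous_intros) (metis ell_pos zero_notin_open_cone less_irrefl real_sqrt_eq_zero_cancel_iff)
  ultimately have "connected (S \<inter> open_cone)"
    by (metis connected_continuous_image convex_connected convex_open_cone)
  moreover have "open open_cone" "open V"
    unfolding open_cone_def V_def
    by (intro open_Collect_conj open_Collect_disj open_Collect_less continuous_intros)+
  moreover have "S \<subseteq> open_cone \<union> V"
    using cone_arc_endpoint by (force simp: S_def V_def open_cone_def cone_arc_def)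
  moreover have "open_cone \<inter> V = {}"
    by (auto simp: open_cone_def V_def)
  ultimately have "connected_component_set S P0 = S \<inter> open_cone"
    using P0 tp_notin by (intro connected_component_eq_separated_part) (auto simp: S_def)
  moreover have "cone_arc = (S \<inter> open_cone) \<union> {tp2, tp3}"
    using cone_arc_endpoint tp2_in_cone_arc tp3_in_cone_arc by (force simp: S_def open_cone_def cone_arc_def)
  ultimately show ?thesis
    unfolding ell_arc_def T2_eq T3_eq S_def P0_def by simp
qed

lemma contour_L_eq:
  "contour_L a b D = closed_segment (0, u3) (u2, 0) \<union> closed_segment (u2, 0) tp2 \<union> cone_arc
     \<union> closed_segment tp3 (0, u3)"
  unfolding contour_L_def K2_eq K3_eq T2_eq T3_eq ell_arc_eq ..

lemma cone_arc_decomp: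
  assumes "q \<in> cone_arc"
  obtains \<alpha> \<beta> where "\<alpha> \<ge> 0" "\<beta> \<ge> 0" "\<alpha> + \<beta> \<ge> 1" "q = \<alpha> *\<^sub>R tp3 + \<beta> *\<^sub>R tp2"
proof -
  obtain \<alpha> \<beta> where ab: "\<alpha> \<ge> 0" "\<beta> \<ge> 0" and q: "q = \<alpha> *\<^sub>R tp3 + \<beta> *\<^sub>R tp2"
    using cone_decomp[OF det2_tp3_tp2_pos] assms unfolding cone_arc_def by blast
  have ell_q: "ell a b q = 1"
    using assms by (simp add: cone_arc_def)
  have "1 = polar q q"
    by (simp add: polar_self ell_q)
  also have "\<dots> = \<alpha> * polar tp3 q + \<beta> * polar tp2 q"
    by (subst (1) q) (simp add: polar_lincomb_left)
  also have "\<dots> \<le> \<alpha> * 1 + \<beta> * 1"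
    using ab ell_q ell_tp2 ell_tp3 by (intro add_mono mult_left_mono polar_le_1) auto
  finally show ?thesis
    using ab q that by simp
qed

lemma polar_tp2_tp3: "polar tp2 tp3 = ((1 - D)\<^sup>2 / a - D / b) / (u2 * u3)"
  using a_pos b_pos u2_pos u3_pos unfolding polar_tp2 tp3_def
  by (simp add: field_simps power2_eq_square)

lemma polar_tp3_K2_le: "polar tp3 (u2, 0) \<le> polar tp3 tp2"
proof -
  have "(1 - D)\<^sup>2 / a - D / b + D * u2\<^sup>2 = (1 + D) * (1 - D)\<^sup>2 / a + D * (D\<^sup>2 - 1) / b"
    unfolding u2_sq using a_pos b_pos by (simp add: field_simps)
  also have "\<dots> \<ge> 0"
    using a_pos b_pos D_gt_1 by (simp add: one_le_power)
  finally have "- D * u2\<^sup>2 / (u2 * u3) \<le> ((1 - D)\<^sup>2 / a - D / b) / (u2 * u3)"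
    using u2_pos u3_pos by (intro divide_right_mono) auto
  then show ?thesis
    using u2_pos by (simp add: polar_commute[of tp3 tp2] polar_tp2_tp3) (simp add: polar_tp3 power2_eq_square)
qed

lemma polar_tp2_K3_le: "polar tp2 (0, u3) \<le> polar tp2 tp3"
proof -
  have "(1 - D)\<^sup>2 / a - D / b + D * u3\<^sup>2 = (1 + D) * (1 - D)\<^sup>2 / a"
    unfolding u3_sq using a_pos b_pos by (simp add: field_simps)
  also have "\<dots> \<ge> 0"
    using a_pos D_gt_1 by simp
  finally have "- D * u3\<^sup>2 / (u2 * u3) \<le> ((1 - D)\<^sup>2 / a - D / b) / (u2 * u3)"
    using u2_pos u3_pos by (intro divide_right_mono) auto
  then show ?thesis
    using u3_pos by (simp add: polar_tp2_tp3) (simp add: polar_tp2 power2_eq_square)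
qed

lemma polar_cone_arc_K2_le: "q \<in> cone_arc \<Longrightarrow> polar q (u2, 0) \<le> 1"
  and polar_cone_arc_K3_le: "q \<in> cone_arc \<Longrightarrow> polar q (0, u3) \<le> 1"
proof -
  assume q_arc: "q \<in> cone_arc"
  then obtain \<alpha> \<beta> where ab: "\<alpha> \<ge> 0" "\<beta> \<ge> 0" and q: "q = \<alpha> *\<^sub>R tp3 + \<beta> *\<^sub>R tp2"
    by (rule cone_arc_decomp)
  from q_arc have ell_q: "ell a b q = 1"
    by (simp add: cone_arc_def)
  have K2: "polar tp2 (u2, 0) = polar tp2 tp2" and K3: "polar tp3 (0, u3) = polar tp3 tp3"
    using u2_pos u3_pos by (simp_all add: polar_self ell_tp2 ell_tp3 polar_tp2 polar_tp3)
  have "polar q (u2, 0) \<le> polar q tp2"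
    unfolding q polar_lincomb_left K2 using ab polar_tp3_K2_le by (simp add: mult_left_mono)
  also have "\<dots> \<le> 1"
    using ell_q ell_tp2 by (rule polar_le_1)
  finally show "polar q (u2, 0) \<le> 1" .
  have "polar q (0, u3) \<le> polar q tp3"
    unfolding q polar_lincomb_left K3 using ab polar_tp2_K3_le by (simp add: mult_left_mono)
  also have "\<dots> \<le> 1"
    using ell_q ell_tp3 by (rule polar_le_1)
  finally show "polar q (0, u3) \<le> 1" .
qed

lemma polar_cone_arc_contour_le:
  assumes "q \<in> cone_arc" "p \<in> contour_L a b D"
  shows "polar q p \<le> 1"
proof -
  have ell_q: "ell a b q = 1"
    using assms(1) by (simp add: cone_arc_def)
  have vertices: "polar q tp2 \<le> 1" "polar q tp3 \<le> 1" "polar q (u2, 0) \<le> 1" "polar q (0, u3) \<le> 1"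
    using ell_q ell_tp2 ell_tp3 polar_cone_arc_K2_le polar_cone_arc_K3_le assms(1)
    by (simp_all add: polar_le_1)
  have "polar q p \<le> 1" if "p \<in> cone_arc"
    using that ell_q by (simp add: cone_arc_def polar_le_1)
  with assms(2) vertices show ?thesis
    unfolding contour_L_eq by (blast intro: polar_le_1_closed_segment)
qed

lemma contour_touches_cone_arc:
  assumes "p \<in> contour_L a b D" "min (fst p) (snd p) < 0"
  shows "\<exists>q\<in>cone_arc. polar q p = 1"
proof -
  have tp2: "polar tp2 (u2, 0) = 1" "polar tp2 tp2 = 1" and tp3: "polar tp3 tp3 = 1" "polar tp3 (0, u3) = 1"
    using u2_pos u3_pos by (simp_all add: polar_self ell_tp2 ell_tp3 polar_tp2 polar_tp3)
  have "p \<notin> closed_segment (0, u3) (u2, 0)"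
    using assms(2) u2_pos u3_pos by (auto simp: closed_segment_def min_less_iff_disj mult_less_0_iff)
  moreover have "polar p p = 1" if "p \<in> cone_arc"
    using that by (simp add: polar_self cone_arc_def)
  ultimately show ?thesis
    using assms(1) tp2_in_cone_arc tp3_in_cone_arc polar_eq_1_closed_segment[OF _ tp2]
      polar_eq_1_closed_segment[OF _ tp3]
    unfolding contour_L_eq by blast
qed

lemma polar_le_of_on_contour:
  assumes "x /\<^sub>R s \<in> contour_L a b D" "s > 0" "q \<in> cone_arc"
  shows "polar q x \<le> s"
  using polar_cone_arc_contour_le[OF assms(3,1)] assms(2)
  by (simp add: polar_scaleR_right field_simps)

lemma polar_eq_of_on_contour:
  assumes "x /\<^sub>R s \<in> contour_L a b D" "s > 0" "min (fst x) (snd x) < 0"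
  shows "\<exists>q\<in>cone_arc. polar q x = s"
proof -
  obtain q where "q \<in> cone_arc" "polar q (x /\<^sub>R s) = 1"
    using contour_touches_cone_arc[OF assms(1) min_scaleR_neg[OF assms(3)]] assms(2) by auto
  then show ?thesis
    using assms(2) by (auto simp: polar_scaleR_right field_simps)
qed

lemma phi_eqI:
  assumes "x /\<^sub>R s \<in> contour_L a b D" "s > 0" "min (fst x) (snd x) < 0"
  shows "phi a b D x = s"
proof -
  have "x \<noteq> 0"
    using assms(3) by auto
  moreover have unique: "s' = s" if s': "s' > 0" "x /\<^sub>R s' \<in> contour_L a b D" for s'
  proof -
    obtain q where q: "q \<in> cone_arc" "polar q x = s'"
      using polar_eq_of_on_contour[OF s'(2,1) assms(3)] by blast
    obtain q' where q': "q' \<in> cone_arc" "polar q' x = s"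
      using polar_eq_of_on_contour[OF assms] by blast
    have "s' \<le> s" "s \<le> s'"
      using polar_le_of_on_contour[OF assms(1,2) q(1)] polar_le_of_on_contour[OF s'(2,1) q'(1)] q(2) q'(2)
      by simp_all
    then show ?thesis
      by simp
  qed
  moreover have "(THE s. s > 0 \<and> x /\<^sub>R s \<in> contour_L a b D) = s"
    using assms(1,2) unique by (intro the_equality) blast+
  ultimately show ?thesis
    unfolding phi_def by simp
qed

text \<open>The three sectors are the cones over the pieces K3 T3, T3 T2 (the arc) and T2 K2 of the contour.\<close>
lemma outside_quadrant_cases:
  assumes "min (fst x) (snd x) < 0"
  obtains "det2 (0, u3) x \<ge> 0" "det2 x tp3 \<ge> 0"
    | "det2 tp3 x \<ge> 0" "det2 x tp2 \<ge> 0"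
    | "det2 tp2 x \<ge> 0" "det2 x (u2, 0) \<ge> 0"
proof (cases "fst x \<le> 0")
  case True
  then have K3: "det2 (0, u3) x \<ge> 0"
    using u3_pos by (simp add: det2_def mult_nonneg_nonpos)
  consider "det2 x tp3 \<ge> 0" | "det2 tp3 x > 0" "det2 x tp2 \<ge> 0" | "det2 tp2 x > 0"
    using det2_swap[of x tp3] det2_swap[of x tp2] by linarith
  then show ?thesis
  proof cases
    case 3
    have "fst tp2 * snd x > snd tp2 * fst x"
      using 3 by (simp add: det2_def)
    moreover have "snd tp2 * fst x \<ge> 0"
      using True tp2_neg by (simp add: mult_nonpos_nonpos)
    ultimately have "snd x < 0"
      using tp2_neg by (smt (verit) mult_nonneg_nonneg mult_nonpos_nonneg)
    then show ?thesis
      using 3 u2_pos that(3) by (simp add: det2_def mult_nonpos_nonneg)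
  qed (use K3 that in auto)
next
  case False
  with assms have "snd x < 0"
    by auto
  moreover have "snd tp2 * fst x < 0" "fst tp2 * snd x > 0"
    using False tp2_neg \<open>snd x < 0\<close> by (simp_all add: mult_neg_pos mult_neg_neg)
  ultimately show ?thesis
    using u2_pos by (intro that(3)) (auto simp: det2_def mult_neg_pos less_imp_le)
qed

lemma ray_meets_contour:
  assumes "min (fst x) (snd x) < 0"
  shows "\<exists>s>0. x /\<^sub>R s \<in> contour_L a b D"
proof -
  have "x \<noteq> 0"
    using assms by auto
  from assms show ?thesis
  proof (cases rule: outside_quadrant_cases)
    case 1
    then show ?thesis
      using ray_meets_closed_segment[OF det2_K3_tp3_pos _ _ \<open>x \<noteq> 0\<close>]
      unfolding contour_L_eq by (auto simp: closed_segment_commute)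
  next
    case 2
    then have "x /\<^sub>R sqrt (ell a b x) \<in> contour_L a b D"
      using ell_normalize_in_cone_arc[OF \<open>x \<noteq> 0\<close>] unfolding contour_L_eq ell_normalize_def by blast
    moreover have "sqrt (ell a b x) > 0"
      using ell_pos[OF \<open>x \<noteq> 0\<close>] by simp
    ultimately show ?thesis
      by blast
  next
    case 3
    then show ?thesis
      using ray_meets_closed_segment[OF det2_tp2_K2_pos _ _ \<open>x \<noteq> 0\<close>]
      unfolding contour_L_eq by (auto simp: closed_segment_commute)
  qed
qed

lemma polar_le_phi:
  assumes "q \<in> cone_arc" "min (fst x) (snd x) < 0"
  shows "polar q x \<le> phi a b D x"
  using ray_meets_contour[OF assms(2)] phi_eqI[OF _ _ assms(2)] polar_le_of_on_contour[OF _ _ assms(1)]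
  by metis

lemma phi_eq_polar:
  assumes "min (fst x) (snd x) < 0"
  shows "\<exists>q\<in>cone_arc. phi a b D x = polar q x"
  using ray_meets_contour[OF assms] phi_eqI[OF _ _ assms] polar_eq_of_on_contour[OF _ _ assms]
  by metis

text \<open>In this sector the contour is the segment K2 T2, which lies on the tangent line polar tp2 = 1.\<close>
lemma phi_eq_polar_tp2:
  assumes "det2 tp2 x \<ge> 0" "det2 x (u2, 0) \<ge> 0" "min (fst x) (snd x) < 0"
  shows "phi a b D x = polar tp2 x"
proof -
  have "x \<noteq> 0"
    using assms(3) by auto
  then obtain s where s: "s > 0" "x /\<^sub>R s \<in> closed_segment tp2 (u2, 0)"
    using ray_meets_closed_segment[OF det2_tp2_K2_pos assms(1,2)] by blast
  have "polar tp2 tp2 = 1" "polar tp2 (u2, 0) = 1"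
    using u2_pos by (simp_all add: polar_self ell_tp2 polar_tp2)
  with s have "polar tp2 x = s"
    using polar_eq_1_closed_segment[OF s(2)] by (simp add: polar_scaleR_right field_simps)
  with s show ?thesis
    using phi_eqI[OF _ _ assms(3)] unfolding contour_L_eq by (auto simp: closed_segment_commute)
qed

lemma phi_eq_sqrt_ell:
  assumes "det2 tp3 x \<ge> 0" "det2 x tp2 \<ge> 0" "min (fst x) (snd x) < 0"
  shows "phi a b D x = sqrt (ell a b x)"
proof -
  have "x \<noteq> 0"
    using assms(3) by auto
  then have "x /\<^sub>R sqrt (ell a b x) \<in> contour_L a b D" "sqrt (ell a b x) > 0"
    using ell_normalize_in_cone_arc[OF _ assms(1,2)] ell_pos
    unfolding contour_L_eq ell_normalize_def by auto
  then show ?thesis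
    using phi_eqI[OF _ _ assms(3)] by blast
qed

lemma phi_add_le:
  assumes "min (fst x) (snd x) < 0" "min (fst (x + m)) (snd (x + m)) < 0"
    and "polar tp2 m \<le> - c" "polar tp3 m \<le> - c" "c \<ge> 0"
  shows "phi a b D (x + m) \<le> phi a b D x - c"
proof -
  obtain q where q: "q \<in> cone_arc" "phi a b D (x + m) = polar q (x + m)"
    using phi_eq_polar[OF assms(2)] by blast
  then obtain \<alpha> \<beta> where ab: "\<alpha> \<ge> 0" "\<beta> \<ge> 0" "\<alpha> + \<beta> \<ge> 1" and q_eq: "q = \<alpha> *\<^sub>R tp3 + \<beta> *\<^sub>R tp2"
    by (auto elim: cone_arc_decomp)
  have "polar q m = \<alpha> * polar tp3 m + \<beta> * polar tp2 m"
    unfolding q_eq polar_lincomb_left ..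
  also have "\<dots> \<le> \<alpha> * (- c) + \<beta> * (- c)"
    using ab assms(3,4) by (intro add_mono mult_left_mono) auto
  also have "\<dots> = - ((\<alpha> + \<beta>) * c)"
    by (simp add: algebra_simps)
  also have "\<dots> \<le> - c"
    using mult_right_mono[OF ab(3) assms(5)] by simp
  finally have "polar q m \<le> - c" .
  moreover have "polar q x \<le> phi a b D x"
    using polar_le_phi[OF q(1) assms(1)] .
  ultimately show ?thesis
    using q(2) by (simp add: polar_add_right)
qed

lemma polar_drift_neg:
  assumes "0 < fst m" "0 < snd m" "fst m < D * snd m" "snd m < D * fst m"
  shows "polar tp2 m < 0" "polar tp3 m < 0"
  using assms u2_pos u3_pos by (simp_all add: polar_tp2 polar_tp3 divide_neg_pos)

end

section \<open>Rollbacks do not increase the gauge\<close>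

lemma min_toR_neg_iff: "min (fst (toR y)) (snd (toR y)) < 0 \<longleftrightarrow> min (fst y) (snd y) < 0"
  by (auto simp: toR_def min_less_iff_disj)

lemma min_toR_add_neg:
  assumes "min (fst y) (snd y) < 0" "fst m < 1" "snd m < 1"
  shows "min (fst (toR y + m)) (snd (toR y + m)) < 0"
proof -
  have "fst y \<le> -1 \<or> snd y \<le> -1"
    using assms(1) by auto
  then show ?thesis
    using assms(2,3) by (auto simp: toR_def min_less_iff_disj)
qed

lemma rb_fst_pos_snd_neg:
  "fst y > 0 \<Longrightarrow> snd y < 0 \<Longrightarrow> rb l2 b12 b23 y = (\<lambda>z. if z = (0, snd y) then b12 else 0)"
  by (auto simp: rb_def Let_def fun_eq_iff)

lemma rb_fst_neg_lt_snd:
  "fst y < snd y \<Longrightarrow> fst y < 0 \<Longrightarrow> rb l2 b12 b23 y = (\<lambda>z. if z = (fst y, fst y) then b23 else 0)"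
  by (auto simp: rb_def Let_def fun_eq_iff)

lemma rb_snd_le_fst_nonpos: "fst y \<le> 0 \<Longrightarrow> snd y \<le> fst y \<Longrightarrow> rb l2 b12 b23 y = (\<lambda>z. 0)"
  by (auto simp: rb_def Let_def fun_eq_iff)

lemma D_R_single_target:
  assumes "rb l2 b12 b23 y = (\<lambda>z. if z = w then c else 0)" "w \<noteq> y" "c \<noteq> 0"
  shows "D_R l2 b12 b23 a b D y = c * (phi a b D (toR w) - phi a b D (toR y))"
proof -
  have "{z. z \<noteq> y \<and> rb l2 b12 b23 y z \<noteq> 0} = {w}"
    using assms by auto
  then show ?thesis
    unfolding D_R_def using assms(1) by simp
qed

lemma D_R_no_target: "rb l2 b12 b23 y = (\<lambda>z. 0) \<Longrightarrow> D_R l2 b12 b23 a b D y = 0"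
  by (simp add: D_R_def)

context tangent_contour
begin

lemma phi_axis_le:
  assumes "s < 0" "t \<ge> 0"
  shows "phi a b D (0, s) \<le> phi a b D (t, s)"
proof -
  have "det2 tp2 (0, s) \<ge> 0" "det2 (0, s) (u2, 0) \<ge> 0"
    using assms tp2_neg u2_pos by (simp_all add: det2_def mult_nonpos_nonpos mult_nonpos_nonneg)
  then have "phi a b D (0, s) = polar tp2 (0, s)"
    using assms(1) by (intro phi_eq_polar_tp2) auto
  also have "\<dots> \<le> polar tp2 (t, s)"
    using assms(2) u2_pos unfolding polar_tp2 by (intro divide_right_mono) auto
  also have "\<dots> \<le> phi a b D (t, s)"
    using assms(1) by (intro polar_le_phi tp2_in_cone_arc) auto
  finally show ?thesis .
qed

lemma phi_diagonal_le:
  assumes "t < 0"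
  shows "phi a b D (t, t) \<le> phi a b D (t, s)"
proof -
  have t0: "(t, t) \<noteq> 0" and min_t: "min t t < 0" "min t s < 0"
    using assms by (auto simp: zero_prod_def)
  have "phi a b D (t, t) = sqrt (ell a b (t, t))"
    using det2_diagonal_pos[OF assms] min_t by (intro phi_eq_sqrt_ell) auto
  also have "\<dots> = polar (t, t) (t, s) / sqrt (ell a b (t, t))"
    using ell_pos[OF t0] by (simp add: polar_def ell_def real_div_sqrt power2_eq_square mult.assoc)
  also have "\<dots> = polar (ell_normalize (t, t)) (t, s)"
    by (simp add: polar_ell_normalize)
  also have "\<dots> \<le> phi a b D (t, s)"
    using det2_diagonal_pos[OF assms] min_t t0
    by (intro polar_le_phi ell_normalize_in_cone_arc) auto
  finally show ?thesis .
qed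

lemma D_R_nonpos:
  assumes "b12 > 0" "b23 > 0" "min (fst y) (snd y) < 0"
  shows "D_R l2 b12 b23 a b D y \<le> 0"
proof -
  obtain y2 y3 where y: "y = (y2, y3)"
    by fastforce
  consider "y2 > 0" "y3 < 0" | "y2 \<le> 0" "y2 < y3" | "y2 \<le> 0" "y3 \<le> y2"
    using assms(3) y by fastforce
  then show ?thesis
  proof cases
    case 1
    then have "rb l2 b12 b23 y = (\<lambda>z. if z = (0, y3) then b12 else 0)"
      using y by (simp add: rb_fst_pos_snd_neg)
    then have "D_R l2 b12 b23 a b D y = b12 * (phi a b D (toR (0, y3)) - phi a b D (toR y))"
      using assms(1) 1 y by (intro D_R_single_target) auto
    moreover have "phi a b D (toR (0, y3)) \<le> phi a b D (toR y)"
      using 1 y by (simp add: toR_def phi_axis_le)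
    ultimately show ?thesis
      using assms(1) by (simp add: mult_nonneg_nonpos)
  next
    case 2
    then have "y2 < 0"
      using assms(3) y by auto
    with 2 have "rb l2 b12 b23 y = (\<lambda>z. if z = (y2, y2) then b23 else 0)"
      using y by (simp add: rb_fst_neg_lt_snd)
    then have "D_R l2 b12 b23 a b D y = b23 * (phi a b D (toR (y2, y2)) - phi a b D (toR y))"
      using assms(2) 2 y by (intro D_R_single_target) auto
    moreover have "phi a b D (toR (y2, y2)) \<le> phi a b D (toR y)"
      using \<open>y2 < 0\<close> y by (simp add: toR_def phi_diagonal_le)
    ultimately show ?thesis
      using assms(2) by (simp add: mult_nonneg_nonpos)
  next
    case 3
    then show ?thesis
      using y by (simp add: D_R_no_target rb_snd_le_fst_nonpos)
  qed
qed

lemma lyapunov_conditions: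
  assumes "b12 > 0" "b23 > 0"
    and "0 < fst m" "fst m < 1" "0 < snd m" "snd m < 1" "fst m < D * snd m" "snd m < D * fst m"
  shows "\<exists>C>0. \<exists>\<epsilon>>0. \<forall>y :: int \<times> int.
           min (fst y) (snd y) < 0 \<and> phi a b D (toR y) > C \<longrightarrow>
             D_R l2 b12 b23 a b D y \<le> 0 \<and> phi a b D (toR y + m) - phi a b D (toR y) < - 5 * \<epsilon>"
proof -
  define c where "c = min (- polar tp2 m) (- polar tp3 m)"
  have c: "c > 0" "polar tp2 m \<le> - c" "polar tp3 m \<le> - c"
    using polar_drift_neg[OF assms(3,5,7,8)] by (auto simp: c_def)
  text \<open>The estimates hold for every y outside the positive quadrant, so any C works.\<close>
  have "D_R l2 b12 b23 a b D y \<le> 0 \<and> phi a b D (toR y + m) - phi a b D (toR y) < - 5 * (c / 10)"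
    if "min (fst y) (snd y) < 0" for y :: "int \<times> int"
    using D_R_nonpos[OF assms(1,2) that] phi_add_le[OF _ min_toR_add_neg[OF that assms(4,6)] c(2,3)] c(1) that
    by (simp add: min_toR_neg_iff)
  moreover have "(1::real) > 0" "c / 10 > 0"
    using c(1) by simp_all
  ultimately show ?thesis
    by blast
qed

end

theorem lemma4:
  fixes l1 l2 l3 b12 b23 a b :: real
  assumes "l1 > 0" "l2 > 0" "l3 > 0" "b12 > 0" "b23 > 0"
    and "l1 + l2 + l3 + b12 + b23 = 1"
    and "l1 < l2" "l1 < l3"
    and "a > 0" "b > 0"
  shows "\<forall>\<^sub>F D in at_top. \<exists>C>0. \<exists>\<epsilon>>0. \<forall>y :: int \<times> int.
           min (fst y) (snd y) < 0 \<and> phi a b D (toR y) > C \<longrightarrow>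
             D_R l2 b12 b23 a b D y \<le> 0 \<and>
             phi a b D (toR y + (l2 - l1, l3 - l1)) - phi a b D (toR y) < - 5 * \<epsilon>"
proof -
  let ?m = "(l2 - l1, l3 - l1)"
  have m: "0 < fst ?m" "fst ?m < 1" "0 < snd ?m" "snd ?m < 1"
    using assms(1-8) by auto
  show ?thesis
    using eventually_gt_at_top[of "max 1 (max (fst ?m / snd ?m) (snd ?m / fst ?m))"]
  proof (rule eventually_mono)
    fix D assume D: "max 1 (max (fst ?m / snd ?m) (snd ?m / fst ?m)) < D"
    interpret tangent_contour a b D
      using assms(9,10) D by unfold_locales auto
    show "\<exists>C>0. \<exists>\<epsilon>>0. \<forall>y :: int \<times> int.
           min (fst y) (snd y) < 0 \<and> phi a b D (toR y) > C \<longrightarrow>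
             D_R l2 b12 b23 a b D y \<le> 0 \<and> phi a b D (toR y + ?m) - phi a b D (toR y) < - 5 * \<epsilon>"
      using D m by (intro lyapunov_conditions assms(4,5)) (auto simp: field_simps)
  qed
qed

end
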